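(* Assume $0<\theta_1\le\dots\le\theta_N$, $m_i>0$, $\sigma>0$, $p>0$, and let $\mathbf y=\mathbf y^*\in\mathbb R^N_+$ be the (unique) positive solution of $$\sum_{k=1}^N m_k(y_k-y_i)+\sigma(\theta_i-y_i^p)y_i=0,\qquad i=1,\dots,N.$$ Let $\bar y=\frac1M\sum_i m_iy_i$. Then there exists an index $1\le i_0\le N$ such that $$\theta_i\le y_i^p\ \text{ for } i\le i_0,\qquad y_{i_0}\le\bar y\le y_{i_0+1},\qquad y_i^p\le\theta_i\ \text{ for } i\ge i_0+1,$$ where conditions involving the index $i_0+1$ are vacuous if $i_0=N$.
   Context: $\mathbb R^N_+$ denotes the set of vectors with all coordinates strictly positive; $M=\sum_i m_i$. *)

theory Defs
  imports Complex_Main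
begin

end

theory Submission
  imports Defs
begin

text \<open>With \<open>ybar\<close> the weighted mean and \<open>M\<close> the total mass, the equation for \<open>y\<^sub>i\<close> reads
  \<open>M (ybar - y\<^sub>i) = \<sigma> (y\<^sub>i\<^sup>p - \<theta>\<^sub>i) y\<^sub>i\<close>, so \<open>y\<^sub>i > ybar\<close> exactly when \<open>y\<^sub>i\<^sup>p < \<theta>\<^sub>i\<close>.
  Since \<open>\<theta>\<close> is nondecreasing and \<open>t \<mapsto> t\<^sup>p\<close> is increasing, the indices with
  \<open>y\<^sub>i \<le> ybar\<close> form an initial segment \<open>{1..i\<^sub>0}\<close>, which is nonempty because
  some \<open>y\<^sub>i\<close> lies below the mean.\<close>

definition weighted_mean :: "'a set \<Rightarrow> ('a \<Rightarrow> real) \<Rightarrow> ('a \<Rightarrow> real) \<Rightarrow> real" where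
  "weighted_mean A m y = (\<Sum>i\<in>A. m i * y i) / (\<Sum>i\<in>A. m i)"

lemma sum_weights_pos:
  assumes "finite A" "A \<noteq> {}" "\<And>i. i \<in> A \<Longrightarrow> m i > 0"
  shows "(\<Sum>i\<in>A. m i) > (0::real)"
  using assms by (intro sum_pos) auto

lemma sum_weighted_deviation:
  assumes "(\<Sum>i\<in>A. m i) \<noteq> 0"
  shows "(\<Sum>k\<in>A. m k * (y k - c)) = (\<Sum>i\<in>A. m i) * (weighted_mean A m y - c)"
proof -
  have "(\<Sum>k\<in>A. m k * (y k - c)) = (\<Sum>k\<in>A. m k * y k) - (\<Sum>i\<in>A. m i) * c"
    by (simp add: right_diff_distrib sum_subtractf sum_distrib_right)
  also have "(\<Sum>k\<in>A. m k * y k) = (\<Sum>i\<in>A. m i) * weighted_mean A m y"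
    using assms by (simp add: weighted_mean_def)
  finally show ?thesis by (simp add: right_diff_distrib)
qed

lemma exists_le_weighted_mean:
  assumes "finite A" "A \<noteq> {}" "\<And>i. i \<in> A \<Longrightarrow> m i > 0"
  shows "\<exists>i\<in>A. y i \<le> weighted_mean A m y"
proof (rule ccontr)
  define c where "c = weighted_mean A m y"
  assume "\<not> (\<exists>i\<in>A. y i \<le> weighted_mean A m y)"
  then have "(\<Sum>i\<in>A. m i * c) < (\<Sum>i\<in>A. m i * y i)"
    using assms by (intro sum_strict_mono) (auto simp: c_def)
  moreover have "(\<Sum>i\<in>A. m i * c) = (\<Sum>i\<in>A. m i) * c"
    by (simp add: sum_distrib_right)
  also have "\<dots> = (\<Sum>i\<in>A. m i * y i)"
    using sum_weights_pos[of A m] assms by (simp add: c_def weighted_mean_def)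
  ultimately show False by simp
qed

lemma gt_iff_powr_lt_of_balance:
  fixes a s c t x p :: real
  assumes "a * (c - x) + s * (t - x powr p) * x = 0" "a > 0" "s > 0" "x > 0"
  shows "c < x \<longleftrightarrow> x powr p < t"
proof -
  have "c < x \<longleftrightarrow> a * (c - x) < 0"
    using \<open>a > 0\<close> by (simp add: mult_less_0_iff)
  also have "\<dots> \<longleftrightarrow> 0 < s * (t - x powr p) * x"
    using assms(1) by linarith
  also have "\<dots> \<longleftrightarrow> x powr p < t"
    using \<open>s > 0\<close> \<open>x > 0\<close> by (simp add: zero_less_mult_iff)
  finally show ?thesis .
qed

lemma le_of_threshold_mono:
  fixes y \<theta> :: "'a \<Rightarrow> real"
  assumes threshold: "\<And>k. k \<in> {i, j} \<Longrightarrow> c < y k \<longleftrightarrow> y k powr p < \<theta> k"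
    and "p > 0" "y i > 0" "y j > 0" "\<theta> i \<le> \<theta> j" "y j \<le> c"
  shows "y i \<le> c"
proof (rule ccontr)
  assume "\<not> y i \<le> c"
  then have "y i powr p < \<theta> i" "\<not> y j powr p < \<theta> j"
    using threshold[of i] threshold[of j] \<open>y j \<le> c\<close> by auto
  with \<open>\<theta> i \<le> \<theta> j\<close> have "y i powr p < y j powr p" by linarith
  then have "y i < y j"
    using \<open>p > 0\<close> \<open>y j > 0\<close> by (metis not_le less_imp_le powr_mono2)
  with \<open>\<not> y i \<le> c\<close> \<open>y j \<le> c\<close> show False by linarith
qed

lemma downward_closed_eq_initial_segment:
  assumes down: "\<And>i j. 1 \<le> i \<Longrightarrow> i \<le> j \<Longrightarrow> j \<le> N \<Longrightarrow> P j \<Longrightarrow> P i"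
    and "\<exists>i\<in>{1..N::nat}. P i"
  shows "\<exists>i0\<in>{1..N}. \<forall>i\<in>{1..N}. P i \<longleftrightarrow> i \<le> i0"
proof -
  define A where "A = {i\<in>{1..N}. P i}"
  have "finite A" "A \<noteq> {}" using assms(2) by (auto simp: A_def)
  then have max_in: "Max A \<in> A" and max_ge: "\<And>i. i \<in> A \<Longrightarrow> i \<le> Max A" by simp_all
  have "P i \<longleftrightarrow> i \<le> Max A" if i: "i \<in> {1..N}" for i
  proof
    show "P i \<Longrightarrow> i \<le> Max A" using i max_ge by (simp add: A_def)
    show "i \<le> Max A \<Longrightarrow> P i" using i max_in down[of i "Max A"] by (simp add: A_def)
  qed
  moreover have "Max A \<in> {1..N}" using max_in by (simp add: A_def)
  ultimately show ?thesis by blast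
qed

lemma threshold_split_index:
  fixes y \<theta> :: "nat \<Rightarrow> real"
  assumes threshold: "\<And>i. i \<in> {1..N} \<Longrightarrow> c < y i \<longleftrightarrow> y i powr p < \<theta> i"
    and mono: "\<And>i j. 1 \<le> i \<Longrightarrow> i \<le> j \<Longrightarrow> j \<le> N \<Longrightarrow> \<theta> i \<le> \<theta> j"
    and "p > 0" and pos: "\<And>i. i \<in> {1..N} \<Longrightarrow> y i > 0"
    and "\<exists>i\<in>{1..N}. y i \<le> c"
  shows "\<exists>i0\<in>{1..N}.
           (\<forall>i\<in>{1..i0}. \<theta> i \<le> y i powr p) \<and> y i0 \<le> c
         \<and> (i0 < N \<longrightarrow> c \<le> y (i0 + 1)) \<and> (\<forall>i\<in>{i0+1..N}. y i powr p \<le> \<theta> i)"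
proof -
  have "\<exists>i0\<in>{1..N}. \<forall>i\<in>{1..N}. y i \<le> c \<longleftrightarrow> i \<le> i0"
  proof (rule downward_closed_eq_initial_segment)
    show "y i \<le> c" if "1 \<le> i" "i \<le> j" "j \<le> N" "y j \<le> c" for i j
    proof (rule le_of_threshold_mono[of i j c y p \<theta>])
      show "c < y k \<longleftrightarrow> y k powr p < \<theta> k" if "k \<in> {i, j}" for k
        using threshold \<open>1 \<le> i\<close> \<open>i \<le> j\<close> \<open>j \<le> N\<close> that by auto
    qed (use that mono \<open>p > 0\<close> pos in auto)
  qed fact
  then obtain i0 where i0: "i0 \<in> {1..N}" and below: "\<forall>i\<in>{1..N}. y i \<le> c \<longleftrightarrow> i \<le> i0" ..
  have "\<theta> i \<le> y i powr p" if "i \<in> {1..i0}" for i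
  proof -
    have "i \<in> {1..N}" using that i0 by simp
    then show ?thesis using that below threshold[of i] by (simp add: not_less[symmetric])
  qed
  moreover have "y i powr p \<le> \<theta> i" if "i \<in> {i0+1..N}" for i
  proof -
    have i: "i \<in> {1..N}" using that i0 by simp
    with below that have "c < y i" by (simp add: not_le[symmetric])
    with threshold[OF i] show ?thesis by simp
  qed
  moreover have "c \<le> y (i0 + 1)" if "i0 < N"
    using that below[rule_format, of "i0 + 1"] by auto
  moreover have "y i0 \<le> c"
    using below i0 by simp
  ultimately show ?thesis
    using i0 by blast
qed

theorem lemma5p5:
  fixes N :: nat and \<theta> m y :: "nat \<Rightarrow> real" and \<sigma> p :: real
  assumes "N \<ge> 1"
    and "0 < \<theta> 1"
    and "\<And>i j. 1 \<le> i \<Longrightarrow> i \<le> j \<Longrightarrow> j \<le> N \<Longrightarrow> \<theta> i \<le> \<theta> j"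
    and "\<And>i. i \<in> {1..N} \<Longrightarrow> m i > 0"
    and "\<sigma> > 0" and "p > 0"
    and "\<And>i. i \<in> {1..N} \<Longrightarrow> y i > 0"
    and "\<And>i. i \<in> {1..N} \<Longrightarrow>
           (\<Sum>k=1..N. m k * (y k - y i)) + \<sigma> * (\<theta> i - y i powr p) * y i = 0"
  shows "\<exists>i0\<in>{1..N}.
           (\<forall>i\<in>{1..i0}. \<theta> i \<le> y i powr p)
         \<and> y i0 \<le> (\<Sum>i=1..N. m i * y i) / (\<Sum>i=1..N. m i)
         \<and> (i0 < N \<longrightarrow> (\<Sum>i=1..N. m i * y i) / (\<Sum>i=1..N. m i) \<le> y (i0 + 1))
         \<and> (\<forall>i\<in>{i0+1..N}. y i powr p \<le> \<theta> i)"
proof -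
  define ybar where "ybar = weighted_mean {1..N} m y"
  have nonempty: "{1..N} \<noteq> {}" using \<open>N \<ge> 1\<close> by simp
  have M_pos: "(\<Sum>i=1..N. m i) > 0"
    using sum_weights_pos[OF _ nonempty] assms(4) by simp
  have "ybar < y i \<longleftrightarrow> y i powr p < \<theta> i" if "i \<in> {1..N}" for i
  proof (rule gt_iff_powr_lt_of_balance[OF _ M_pos \<open>\<sigma> > 0\<close> assms(7)[OF that]])
    show "(\<Sum>i=1..N. m i) * (ybar - y i) + \<sigma> * (\<theta> i - y i powr p) * y i = 0"
      using assms(8)[OF that] M_pos by (simp add: sum_weighted_deviation ybar_def)
  qed
  moreover have "\<exists>i\<in>{1..N}. y i \<le> ybar"
    using exists_le_weighted_mean[OF _ nonempty] assms(4) by (simp add: ybar_def)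
  ultimately show ?thesis
    using threshold_split_index[of N ybar y p \<theta>] assms(3,6,7)
    unfolding ybar_def weighted_mean_def by blast
qed

end
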